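(* For every $m\ge1$, $\psi_{(2^m)}-h_2\psi_{(2^{m-1})}$ is Schur-positive. More generally, for $1\le k\le m$, $\psi_{(2^m)}-h_2^k\psi_{(2^{m-k})}$ is Schur-positive.
   Context: For $j\ge0$, $\psi_{(2^j)}=\sum_{i=0}^jp_2^ip_1^{2j-2i}$ (so $\psi_{(2^0)}=1$), where $p_i$ are power sums; this is the sum of $p_\lambda$ over all partitions $\lambda$ of $2j$ with all parts equal to $1$ or $2$. $h_2$ is the complete homogeneous symmetric function of degree 2. Schur-positive means a nonnegative integer combination of Schur functions. *)

theory Defs
  imports Main "HOL-Library.Poly_Mapping"
begin

(* Polynomials in the variables x_0, x_1, ... with integer coefficients:
  a monomial is an exponent vector (nat \<Rightarrow>0 nat), a polynomial a finitely supported
  map from monomials to coefficients. *)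

type_synonym spoly = "(nat \<Rightarrow>\<^sub>0 nat) \<Rightarrow>\<^sub>0 int"

definition mono :: "(nat \<Rightarrow>\<^sub>0 nat) \<Rightarrow> spoly" where
  "mono \<alpha> = Poly_Mapping.single \<alpha> 1"

definition var_pow :: "nat \<Rightarrow> nat \<Rightarrow> nat \<Rightarrow>\<^sub>0 nat" where
  "var_pow i r = Poly_Mapping.single i r"

definition psum :: "nat \<Rightarrow> nat \<Rightarrow> spoly" where
  "psum N r = (\<Sum>i<N. mono (var_pow i r))"

definition mdeg :: "(nat \<Rightarrow>\<^sub>0 nat) \<Rightarrow> nat" where
  "mdeg \<alpha> = (\<Sum>i\<in>Poly_Mapping.keys \<alpha>. Poly_Mapping.lookup \<alpha> i)"

definition hcomp :: "nat \<Rightarrow> nat \<Rightarrow> spoly" where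
  "hcomp N k = (\<Sum>\<alpha>\<in>{\<alpha>. Poly_Mapping.keys \<alpha> \<subseteq> {..<N} \<and> mdeg \<alpha> = k}. mono \<alpha>)"

definition is_partition :: "nat list \<Rightarrow> bool" where
  "is_partition la \<longleftrightarrow> sorted (rev la) \<and> (\<forall>x\<in>set la. 0 < x)"

definition cells :: "nat list \<Rightarrow> (nat \<times> nat) set" where
  "cells la = {(i, j). i < length la \<and> j < la ! i}"

definition ssyt :: "nat \<Rightarrow> nat list \<Rightarrow> (nat \<times> nat \<Rightarrow> nat) set" where
  "ssyt N la = {T. (\<forall>c. c \<notin> cells la \<longrightarrow> T c = 0)
      \<and> (\<forall>c\<in>cells la. T c < N)
      \<and> (\<forall>i j. (i, j) \<in> cells la \<and> (i, Suc j) \<in> cells la \<longrightarrow> T (i, j) \<le> T (i, Suc j))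
      \<and> (\<forall>i j. (i, j) \<in> cells la \<and> (Suc i, j) \<in> cells la \<longrightarrow> T (i, j) < T (Suc i, j))}"

definition content :: "nat list \<Rightarrow> (nat \<times> nat \<Rightarrow> nat) \<Rightarrow> nat \<Rightarrow>\<^sub>0 nat" where
  "content la T = (\<Sum>c\<in>cells la. Poly_Mapping.single (T c) 1)"

definition schur :: "nat \<Rightarrow> nat list \<Rightarrow> spoly" where
  "schur N la = (\<Sum>T\<in>ssyt N la. mono (content la T))"

definition schur_positive :: "nat \<Rightarrow> spoly \<Rightarrow> bool" where
  "schur_positive N f \<longleftrightarrow> (\<exists>S c. finite S \<and> (\<forall>la\<in>S. is_partition la) \<and>
      f = (\<Sum>la\<in>S. of_nat (c la) * schur N la))"

definition psi2 :: "nat \<Rightarrow> nat \<Rightarrow> spoly" where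
  "psi2 N j = (\<Sum>i\<le>j. psum N 2 ^ i * psum N 1 ^ (2 * j - 2 * i))"

end

theory Submission
  imports Defs
begin

(* With h = h_2 and e = e_2 one has p_1^2 = h + e and p_2 = h - e, so
  psi_(2^j) = sum_i (h - e)^i (h + e)^(j - i) is the complete homogeneous polynomial of degree j
  in the two quantities h + e and h - e.  Telescoping this representation gives
  psi_(2^m) - h^k psi_(2^(m-k)) = sum_{j<k} h^j Q_(m-j) with
  Q_n = ((h + e)^n + (h - e)^n) / 2 = sum_{i even} (n choose i) e^i h^(n-i),
  a nonnegative integer combination of products h^a e^b.  These are Schur-positive because
  multiplication by h_2 and by e_2 preserves Schur positivity: Schensted row insertion of two
  letters a, b into a tableau of shape la adds two boxes, and by the row bumping lemma the second
  box lies weakly above the first iff a <= b, which splits h_2 s_la + e_2 s_la = p_1^2 s_la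
  into the two sums of Schur polynomials. *)

definition row_len :: "nat list \<Rightarrow> nat \<Rightarrow> nat" where
  "row_len la i = (if i < length la then la ! i else 0)"

lemma cells_iff_row_len: "(i, j) \<in> cells la \<longleftrightarrow> j < row_len la i"
  by (auto simp: cells_def row_len_def)

lemma finite_cells: "finite (cells la)"
  by (rule finite_subset[of _ "SIGMA i:{..<length la}. {..<la ! i}"]) (auto simp: cells_def)

lemma is_partition_iff_row_len: "is_partition la \<longleftrightarrow>
   (\<forall>i. row_len la (Suc i) \<le> row_len la i) \<and> (\<forall>i<length la. 0 < la ! i)"
  unfolding is_partition_def sorted_rev_iff_nth_Suc row_len_def
  by (auto simp: in_set_conv_nth)

lemma row_len_antimono: "is_partition la \<Longrightarrow> i \<le> j \<Longrightarrow> row_len la j \<le> row_len la i"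
  by (rule lift_Suc_antimono_le[of "row_len la"]) (auto simp: is_partition_iff_row_len)

definition add_box :: "nat list \<Rightarrow> nat \<Rightarrow> nat list" where
  "add_box la r = (if r < length la then la[r := Suc (la ! r)] else la @ [1])"

definition addable :: "nat list \<Rightarrow> nat \<Rightarrow> bool" where
  "addable la r \<longleftrightarrow> r \<le> length la \<and> (r = 0 \<or> row_len la r < row_len la (r - 1))"

lemma finite_addable: "finite {r. addable la r}"
  by (rule finite_subset[of _ "{..length la}"]) (auto simp: addable_def)

lemma row_len_add_box: "r \<le> length la \<Longrightarrow>
  row_len (add_box la r) i = (if i = r then Suc (row_len la r) else row_len la i)"
  by (auto simp: add_box_def row_len_def nth_append)

lemma cells_add_box: "r \<le> length la \<Longrightarrow> cells (add_box la r) = insert (r, row_len la r) (cells la)"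
  by (auto simp: cells_iff_row_len row_len_add_box split: if_splits)

lemma is_partition_add_box:
  assumes part: "is_partition la" and ad: "addable la r"
  shows "is_partition (add_box la r)"
proof -
  have r: "r \<le> length la" using ad by (simp add: addable_def)
  have m: "row_len la (Suc i) \<le> row_len la i" for i
    using part by (simp add: is_partition_iff_row_len)
  have "row_len (add_box la r) (Suc i) \<le> row_len (add_box la r) i" for i
    using m[of i] m[of r] ad by (cases "Suc i = r") (auto simp: row_len_add_box[OF r] addable_def)
  moreover have "0 < add_box la r ! i" if "i < length (add_box la r)" for i
    using that part by (auto simp: add_box_def is_partition_iff_row_len nth_list_update nth_append)
  ultimately show ?thesis by (simp add: is_partition_iff_row_len)
qed

lemma ssyt_iff_row_len: "T \<in> ssyt N la \<longleftrightarrow>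
   (\<forall>i j. row_len la i \<le> j \<longrightarrow> T (i, j) = 0) \<and>
   (\<forall>i j. j < row_len la i \<longrightarrow> T (i, j) < N) \<and>
   (\<forall>i j. Suc j < row_len la i \<longrightarrow> T (i, j) \<le> T (i, Suc j)) \<and>
   (\<forall>i j. j < row_len la i \<and> j < row_len la (Suc i) \<longrightarrow> T (i, j) < T (Suc i, j))"
  unfolding ssyt_def by (auto simp: not_less split_paired_All Ball_def cells_iff_row_len)

lemma ssyt_outside_eq_0: "T \<in> ssyt N la \<Longrightarrow> row_len la i \<le> j \<Longrightarrow> T (i, j) = 0"
  by (simp add: ssyt_iff_row_len)

lemma ssyt_entry_less: "T \<in> ssyt N la \<Longrightarrow> j < row_len la i \<Longrightarrow> T (i, j) < N"
  by (simp add: ssyt_iff_row_len)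

lemma ssyt_col_less:
  assumes "T \<in> ssyt N la" "is_partition la" "j < row_len la (Suc i)"
  shows "T (i, j) < T (Suc i, j)"
proof -
  have "j < row_len la i" using assms(2,3) is_partition_iff_row_len less_le_trans by blast
  then show ?thesis using assms by (simp add: ssyt_iff_row_len)
qed

lemma ssyt_row_mono:
  assumes "T \<in> ssyt N la" "j \<le> j'" "j' < row_len la i"
  shows "T (i, j) \<le> T (i, j')"
  using assms(2,3)
proof (induction j' rule: dec_induct)
  case (step n)
  then show ?case using assms(1) by (auto simp: ssyt_iff_row_len intro: order_trans)
qed simp

lemma finite_ssyt: "finite (ssyt N la)"
proof (rule finite_subset[OF _ finite_set_of_finite_funs[OF finite_cells[of la] finite_lessThan[of N]]])
  show "ssyt N la \<subseteq> {f. \<forall>x. (x \<in> cells la \<longrightarrow> f x \<in> {..<N}) \<and> (x \<notin> cells la \<longrightarrow> f x = 0)}"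
    unfolding ssyt_def by auto
qed

lemma ssyt_fun_upd:
  assumes T: "T \<in> ssyt N la" and c: "c < row_len la i" and v: "v < N"
    and left: "0 < c \<Longrightarrow> T (i, c - 1) \<le> v"
    and right: "Suc c < row_len la i \<Longrightarrow> v \<le> T (i, Suc c)"
    and above: "0 < i \<Longrightarrow> T (i - 1, c) < v"
    and below: "c < row_len la (Suc i) \<Longrightarrow> v < T (Suc i, c)"
  shows "T((i, c) := v) \<in> ssyt N la"
proof -
  note T' = T[unfolded ssyt_iff_row_len]
  show ?thesis unfolding ssyt_iff_row_len
  proof (intro conjI allI impI)
    fix i' j assume "row_len la i' \<le> j" then show "(T((i, c) := v)) (i', j) = 0" using T' c by auto
  next
    fix i' j assume "j < row_len la i'" then show "(T((i, c) := v)) (i', j) < N" using T' v by auto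
  next
    fix i' j assume "Suc j < row_len la i'" then show "(T((i, c) := v)) (i', j) \<le> (T((i, c) := v)) (i', Suc j)"
      using T' left right by (cases "i' = i"; cases "j = c"; cases "Suc j = c") auto
  next
    fix i' j assume "j < row_len la i' \<and> j < row_len la (Suc i')"
    then show "(T((i, c) := v)) (i', j) < (T((i, c) := v)) (Suc i', j)"
      using T' above below by (cases "i' = i"; cases "j = c"; cases "Suc i' = i") auto
  qed
qed

lemma content_fun_upd:
  assumes "(i, c) \<in> cells la"
  shows "content la (T((i, c) := v)) + Poly_Mapping.single (T (i, c)) 1 = content la T + Poly_Mapping.single v 1"
proof -
  let ?rest = "\<Sum>d\<in>cells la - {(i, c)}. Poly_Mapping.single (T d) 1"
  have "content la T = Poly_Mapping.single (T (i, c)) 1 + ?rest"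
    unfolding content_def using assms finite_cells by (simp add: sum.remove)
  moreover have "content la (T((i, c) := v)) = Poly_Mapping.single v 1 + ?rest"
    unfolding content_def using assms finite_cells by (simp add: sum.remove)
  ultimately show ?thesis by (simp add: add_ac)
qed

lemma content_add_box:
  assumes "r \<le> length la"
  shows "content (add_box la r) (T((r, row_len la r) := v)) = content la T + Poly_Mapping.single v 1"
proof -
  have new: "(r, row_len la r) \<notin> cells la" by (simp add: cells_iff_row_len)
  have "content (add_box la r) (T((r, row_len la r) := v)) =
     Poly_Mapping.single v 1 + (\<Sum>d\<in>cells la. Poly_Mapping.single ((T((r, row_len la r) := v)) d) 1)"
    unfolding content_def cells_add_box[OF assms] using new finite_cells by simp
  also have "(\<Sum>d\<in>cells la. Poly_Mapping.single ((T((r, row_len la r) := v)) d) 1) = content la T"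
    unfolding content_def using new by (intro sum.cong) auto
  finally show ?thesis by (simp add: add_ac fun_upd_def)
qed

lemma ssyt_add_box_fun_upd:
  assumes T: "T \<in> ssyt N la" and part: "is_partition la" and ad: "addable la r" and v: "v < N"
    and left: "\<And>c. c < row_len la r \<Longrightarrow> T (r, c) \<le> v"
    and above: "0 < r \<Longrightarrow> T (r - 1, row_len la r) < v"
  shows "T((r, row_len la r) := v) \<in> ssyt N (add_box la r)"
proof -
  have "r \<le> length la" using ad by (simp add: addable_def)
  note rw = row_len_add_box[OF this]
  note T' = T[unfolded ssyt_iff_row_len]
  have below: "row_len la (Suc r) \<le> row_len la r" using part by (simp add: is_partition_iff_row_len)
  show ?thesis unfolding ssyt_iff_row_len
  proof (intro conjI allI impI)
    fix i j assume "row_len (add_box la r) i \<le> j"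
    then show "(T((r, row_len la r) := v)) (i, j) = 0" using T' by (auto simp: rw split: if_splits)
  next
    fix i j assume "j < row_len (add_box la r) i"
    then show "(T((r, row_len la r) := v)) (i, j) < N" using T' v by (auto simp: rw split: if_splits)
  next
    fix i j assume "Suc j < row_len (add_box la r) i"
    then show "(T((r, row_len la r) := v)) (i, j) \<le> (T((r, row_len la r) := v)) (i, Suc j)"
      using T' left by (cases "i = r") (auto simp: rw less_Suc_eq)
  next
    fix i j assume "j < row_len (add_box la r) i \<and> j < row_len (add_box la r) (Suc i)"
    then show "(T((r, row_len la r) := v)) (i, j) < (T((r, row_len la r) := v)) (Suc i, j)"
      using T' below above
      by (cases "i = r"; cases "Suc i = r"; cases "j = row_len la r") (auto simp: rw)
  qed
qed

lemma ssyt_remove_corner: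
  assumes ad: "addable la r" and U: "U \<in> ssyt N (add_box la r)"
  shows "U((r, row_len la r) := 0) \<in> ssyt N la"
proof -
  have "r \<le> length la" using ad by (simp add: addable_def)
  note rw = row_len_add_box[OF this]
  note U' = U[unfolded ssyt_iff_row_len]
  show ?thesis unfolding ssyt_iff_row_len
  proof (intro conjI allI impI)
    fix i j assume "row_len la i \<le> j"
    then show "(U((r, row_len la r) := 0)) (i, j) = 0" using U' by (cases "i = r") (auto simp: rw)
  next
    fix i j assume "j < row_len la i"
    then show "(U((r, row_len la r) := 0)) (i, j) < N" using U' by (cases "i = r") (auto simp: rw)
  next
    fix i j assume "Suc j < row_len la i"
    then show "(U((r, row_len la r) := 0)) (i, j) \<le> (U((r, row_len la r) := 0)) (i, Suc j)"
      using U' by (cases "i = r") (auto simp: rw)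
  next
    fix i j assume "j < row_len la i \<and> j < row_len la (Suc i)"
    then show "(U((r, row_len la r) := 0)) (i, j) < (U((r, row_len la r) := 0)) (Suc i, j)"
      using U' by (cases "i = r"; cases "Suc i = r") (auto simp: rw)
  qed
qed

section \<open>Row insertion\<close>

definition bump_col :: "nat list \<Rightarrow> (nat \<times> nat \<Rightarrow> nat) \<Rightarrow> nat \<Rightarrow> nat \<Rightarrow> nat" where
  "bump_col la T i x = (LEAST c. c = row_len la i \<or> x < T (i, c))"

lemma bump_col_le: "bump_col la T i x \<le> row_len la i"
  unfolding bump_col_def by (rule Least_le) simp

lemma bump_col_less:
  assumes "bump_col la T i x < row_len la i"
  shows "x < T (i, bump_col la T i x)" "\<And>c. c < bump_col la T i x \<Longrightarrow> T (i, c) \<le> x"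
proof -
  have "bump_col la T i x = row_len la i \<or> x < T (i, bump_col la T i x)"
    unfolding bump_col_def by (rule LeastI[of _ "row_len la i"]) simp
  then show "x < T (i, bump_col la T i x)" using assms by simp
  show "T (i, c) \<le> x" if "c < bump_col la T i x" for c
    using not_less_Least[OF that[unfolded bump_col_def]] assms that by simp
qed

lemma bump_col_eq_row_lenD: "bump_col la T i x = row_len la i \<Longrightarrow> c < row_len la i \<Longrightarrow> T (i, c) \<le> x"
  using not_less_Least[of c "\<lambda>c. c = row_len la i \<or> x < T (i, c)"] by (simp add: bump_col_def)

lemma bump_col_eq_row_lenI: "(\<And>c. c < row_len la i \<Longrightarrow> T (i, c) \<le> x) \<Longrightarrow> bump_col la T i x = row_len la i"
  unfolding bump_col_def by (rule Least_equality) (auto simp: not_le[symmetric])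

lemma bump_col_eqI:
  "c < row_len la i \<Longrightarrow> x < T (i, c) \<Longrightarrow> (\<And>c'. c' < c \<Longrightarrow> T (i, c') \<le> x) \<Longrightarrow> bump_col la T i x = c"
  unfolding bump_col_def by (rule Least_equality) (auto simp: not_le[symmetric])

lemma bump_col_le_of_less: "x < T (i, c) \<Longrightarrow> bump_col la T i x \<le> c"
  unfolding bump_col_def by (rule Least_le) simp

text \<open>\<^term>\<open>row_insert la T i x\<close> inserts \<^term>\<open>x\<close> into row \<^term>\<open>i\<close> and returns the new
  tableau together with the row in which a box has been added.\<close>

function row_insert :: "nat list \<Rightarrow> (nat \<times> nat \<Rightarrow> nat) \<Rightarrow> nat \<Rightarrow> nat \<Rightarrow> (nat \<times> nat \<Rightarrow> nat) \<times> nat" where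
  "row_insert la T i x = (let c = bump_col la T i x in
     if c < row_len la i then row_insert la (T((i, c) := x)) (Suc i) (T (i, c)) else (T((i, c) := x), i))"
  by pat_completeness auto
termination
  by (relation "measure (\<lambda>(la, T, i, x). length la - i)") (auto simp: row_len_def split: if_splits)

declare row_insert.simps[simp del]

lemma row_insert_bump: "bump_col la T i x < row_len la i \<Longrightarrow>
   row_insert la T i x = row_insert la (T((i, bump_col la T i x) := x)) (Suc i) (T (i, bump_col la T i x))"
  by (subst row_insert.simps) (simp add: Let_def)

lemma row_insert_stop: "bump_col la T i x = row_len la i \<Longrightarrow>
   row_insert la T i x = (T((i, row_len la i) := x), i)"
  by (subst row_insert.simps) (simp add: Let_def)

lemma row_insert_row_ge: "row_insert la T i x = (U, r) \<Longrightarrow> i \<le> r"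
proof (induction la T i x rule: row_insert.induct)
  case (1 la T i x)
  then show ?case by (subst (asm) row_insert.simps) (fastforce simp: Let_def split: if_splits)
qed

lemma row_insert_keeps_upper: "row_insert la T i x = (U, r) \<Longrightarrow> j < i \<Longrightarrow> U (j, c) = T (j, c)"
proof (induction la T i x arbitrary: U r rule: row_insert.induct)
  case (1 la T i x)
  then show ?case by (subst (asm) row_insert.simps) (fastforce simp: Let_def split: if_splits)
qed

text \<open>The invariant of row insertion: \<^term>\<open>x\<close> has just been bumped out of row \<^term>\<open>i - 1\<close>
  at some column \<^term>\<open>j\<close>, so the entries of row \<^term>\<open>i - 1\<close> up to column \<^term>\<open>j\<close> are
  smaller than \<^term>\<open>x\<close> and those of row \<^term>\<open>i\<close> from column \<^term>\<open>j\<close> on are larger.\<close>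

definition insert_inv :: "nat \<Rightarrow> nat list \<Rightarrow> (nat \<times> nat \<Rightarrow> nat) \<Rightarrow> nat \<Rightarrow> nat \<Rightarrow> bool" where
  "insert_inv N la T i x \<longleftrightarrow> T \<in> ssyt N la \<and> x < N \<and> i \<le> length la \<and>
    (0 < i \<longrightarrow> (\<exists>j. j < row_len la (i - 1) \<and> (\<forall>c\<le>j. T (i - 1, c) < x) \<and>
        (\<forall>c. j \<le> c \<and> c < row_len la i \<longrightarrow> x < T (i, c))))"

lemma insert_invI:
  assumes "T \<in> ssyt N la" "x < N" "i \<le> length la"
    and "0 < i \<Longrightarrow> j < row_len la (i - 1)"
    and "\<And>c. 0 < i \<Longrightarrow> c \<le> j \<Longrightarrow> T (i - 1, c) < x"
    and "\<And>c. j \<le> c \<Longrightarrow> c < row_len la i \<Longrightarrow> x < T (i, c)"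
  shows "insert_inv N la T i x"
  using assms unfolding insert_inv_def by blast

lemma insert_inv_0: "insert_inv N la T 0 x \<longleftrightarrow> T \<in> ssyt N la \<and> x < N"
  by (simp add: insert_inv_def)

lemma insert_inv_above:
  assumes I: "insert_inv N la T i x" and "0 < i" and c: "c \<le> row_len la i"
    and small: "\<And>c'. c' < c \<Longrightarrow> T (i, c') \<le> x"
  shows "c < row_len la (i - 1)" and "c' \<le> c \<Longrightarrow> T (i - 1, c') < x"
proof -
  obtain j where j: "j < row_len la (i - 1)" "\<forall>c\<le>j. T (i - 1, c) < x"
      "\<forall>c. j \<le> c \<and> c < row_len la i \<longrightarrow> x < T (i, c)"
    using I \<open>0 < i\<close> by (auto simp: insert_inv_def)
  have "c \<le> j"
  proof (rule ccontr)
    assume "\<not> c \<le> j"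
    then have "x < T (i, j)" using j(3) c by auto
    with small[of j] \<open>\<not> c \<le> j\<close> show False by simp
  qed
  then show "c < row_len la (i - 1)" and "c' \<le> c \<Longrightarrow> T (i - 1, c') < x" using j by auto
qed

lemma insert_inv_bump:
  assumes part: "is_partition la" and I: "insert_inv N la T i x" and c_def: "c = bump_col la T i x"
    and c: "c < row_len la i"
  shows "insert_inv N la (T((i, c) := x)) (Suc i) (T (i, c))"
proof -
  have T: "T \<in> ssyt N la" and x: "x < N" using I by (auto simp: insert_inv_def)
  have bigger: "x < T (i, c)" and smaller: "\<And>c'. c' < c \<Longrightarrow> T (i, c') \<le> x"
    using bump_col_less[of la T i x] c c_def by auto
  show ?thesis
  proof (rule insert_invI[where j = c])
    show "T((i, c) := x) \<in> ssyt N la"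
    proof (rule ssyt_fun_upd[OF T c x])
      show "0 < c \<Longrightarrow> T (i, c - 1) \<le> x" using smaller by simp
      show "Suc c < row_len la i \<Longrightarrow> x \<le> T (i, Suc c)"
        using ssyt_row_mono[OF T, of c "Suc c" i] bigger by simp
      show "0 < i \<Longrightarrow> T (i - 1, c) < x"
        using insert_inv_above(2)[OF I _ less_imp_le[OF c] smaller] by simp
      show "c < row_len la (Suc i) \<Longrightarrow> x < T (Suc i, c)"
        using ssyt_col_less[OF T part] bigger by (meson less_trans)
    qed
    show "T (i, c) < N" "Suc i \<le> length la" "0 < Suc i \<Longrightarrow> c < row_len la (Suc i - 1)"
      using ssyt_entry_less[OF T c] c by (auto simp: row_len_def split: if_splits)
    show "(T((i, c) := x)) (Suc i - 1, c') < T (i, c)" if "c' \<le> c" for c'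
      using smaller[of c'] bigger that by (cases "c' = c") auto
    show "T (i, c) < (T((i, c) := x)) (Suc i, c')" if "c \<le> c'" "c' < row_len la (Suc i)" for c'
    proof -
      have "c' < row_len la i" using part that(2) is_partition_iff_row_len less_le_trans by blast
      then have "T (i, c) \<le> T (i, c')" using ssyt_row_mono[OF T] that(1) by auto
      also have "\<dots> < T (Suc i, c')" using ssyt_col_less[OF T part] that(2) by auto
      finally show ?thesis by simp
    qed
  qed
qed

lemma insert_inv_stop:
  assumes part: "is_partition la" and I: "insert_inv N la T i x"
    and stop: "bump_col la T i x = row_len la i"
  shows "addable la i" and "T((i, row_len la i) := x) \<in> ssyt N (add_box la i)"
proof -
  have T: "T \<in> ssyt N la" and x: "x < N" and i: "i \<le> length la" using I by (auto simp: insert_inv_def)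
  note small = bump_col_eq_row_lenD[OF stop]
  show ad: "addable la i"
    using insert_inv_above(1)[OF I _ order.refl small] i by (auto simp: addable_def)
  show "T((i, row_len la i) := x) \<in> ssyt N (add_box la i)"
    using ssyt_add_box_fun_upd[OF T part ad x small] insert_inv_above(2)[OF I _ order.refl small] by simp
qed

lemma row_insert_correct:
  "is_partition la \<Longrightarrow> insert_inv N la T i x \<Longrightarrow> row_insert la T i x = (U, r) \<Longrightarrow>
   U \<in> ssyt N (add_box la r) \<and> addable la r \<and>
   content (add_box la r) U = content la T + Poly_Mapping.single x 1"
proof (induction la T i x arbitrary: U r rule: row_insert.induct)
  case (1 la T i x)
  note part = 1(2) and I = 1(3)
  show ?case
  proof (cases "bump_col la T i x < row_len la i")
    case True
    define c where "c = bump_col la T i x"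
    have c: "c < row_len la i" using True c_def by simp
    have "row_insert la (T((i, c) := x)) (Suc i) (T (i, c)) = (U, r)"
      using 1(4) row_insert_bump[OF True] c_def by simp
    from 1(1)[OF c_def c part insert_inv_bump[OF part I c_def c] this]
    have "U \<in> ssyt N (add_box la r) \<and> addable la r \<and>
       content (add_box la r) U = content la (T((i, c) := x)) + Poly_Mapping.single (T (i, c)) 1" .
    moreover have "content la (T((i, c) := x)) + Poly_Mapping.single (T (i, c)) 1 =
        content la T + Poly_Mapping.single x 1"
      using content_fun_upd[of i c la T x] c by (simp add: cells_iff_row_len)
    ultimately show ?thesis by simp
  next
    case False
    then have stop: "bump_col la T i x = row_len la i" using bump_col_le[of la T i x] by simp
    have "U = T((i, row_len la i) := x)" "r = i" using 1(4) row_insert_stop[OF stop] by auto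
    then show ?thesis using insert_inv_stop[OF part I stop] content_add_box[of i la T x] I
      by (simp add: insert_inv_def fun_upd_def)
  qed
qed

section \<open>Reverse row insertion\<close>

definition unbump_col :: "nat list \<Rightarrow> (nat \<times> nat \<Rightarrow> nat) \<Rightarrow> nat \<Rightarrow> nat \<Rightarrow> nat" where
  "unbump_col la U i y = (GREATEST c. c < row_len la i \<and> U (i, c) < y)"

lemma unbump_col_props:
  assumes "k < row_len la i" "U (i, k) < y"
  shows "unbump_col la U i y < row_len la i" "U (i, unbump_col la U i y) < y" "k \<le> unbump_col la U i y"
    "\<And>c. c < row_len la i \<Longrightarrow> U (i, c) < y \<Longrightarrow> c \<le> unbump_col la U i y"
proof -
  have bound: "\<And>c. c < row_len la i \<and> U (i, c) < y \<Longrightarrow> c \<le> row_len la i" by simp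
  have "unbump_col la U i y < row_len la i \<and> U (i, unbump_col la U i y) < y"
    unfolding unbump_col_def by (rule GreatestI_nat[of _ k, OF _ bound]) (use assms in simp)
  then show "unbump_col la U i y < row_len la i" "U (i, unbump_col la U i y) < y" by auto
  show "k \<le> unbump_col la U i y"
    unfolding unbump_col_def by (rule Greatest_le_nat[OF _ bound]) (use assms in simp)
  show "c \<le> unbump_col la U i y" if "c < row_len la i" "U (i, c) < y" for c
    unfolding unbump_col_def by (intro Greatest_le_nat[OF _ bound]) (use that in simp)
qed

lemma unbump_col_eqI: "c < row_len la i \<Longrightarrow> U (i, c) < y \<Longrightarrow>
   (\<And>c'. c < c' \<Longrightarrow> c' < row_len la i \<Longrightarrow> y \<le> U (i, c')) \<Longrightarrow> unbump_col la U i y = c"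
  unfolding unbump_col_def by (rule Greatest_equality) (auto simp: not_less[symmetric])

function row_uninsert :: "nat list \<Rightarrow> (nat \<times> nat \<Rightarrow> nat) \<Rightarrow> nat \<Rightarrow> nat \<Rightarrow> nat \<Rightarrow> (nat \<times> nat \<Rightarrow> nat) \<times> nat" where
  "row_uninsert la U i k y = (if i < k then (case row_uninsert la U (Suc i) k y of (U1, y1) \<Rightarrow>
      (U1((i, unbump_col la U1 i y1) := y1), U1 (i, unbump_col la U1 i y1))) else (U, y))"
  by pat_completeness auto
termination
  by (relation "measure (\<lambda>(la, U, i, k, y). k - i)") auto

declare row_uninsert.simps[simp del]

lemma row_uninsert_less: "i < k \<Longrightarrow> row_uninsert la U (Suc i) k y = (U1, y1) \<Longrightarrow>
   row_uninsert la U i k y = (U1((i, unbump_col la U1 i y1) := y1), U1 (i, unbump_col la U1 i y1))"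
  by (subst row_uninsert.simps) simp

lemma row_uninsert_ge: "\<not> i < k \<Longrightarrow> row_uninsert la U i k y = (U, y)"
  by (subst row_uninsert.simps) simp

lemma bump_col_fun_upd_less:
  assumes U: "U \<in> ssyt N la" and c: "c < row_len la i" and "U (i, c) < y"
  shows "bump_col la (U((i, c) := y)) i (U (i, c)) = c"
proof (rule bump_col_eqI[OF c])
  show "U (i, c) < (U((i, c) := y)) (i, c)" using \<open>U (i, c) < y\<close> by simp
  show "(U((i, c) := y)) (i, c') \<le> U (i, c)" if "c' < c" for c'
    using ssyt_row_mono[OF U, of c' c i] c that by simp
qed

lemma unbump_col_bump_col:
  assumes T: "T \<in> ssyt N la" and c: "bump_col la T i x < row_len la i"
  shows "unbump_col la (T((i, bump_col la T i x) := x)) i (T (i, bump_col la T i x)) = bump_col la T i x"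
proof (rule unbump_col_eqI[OF c])
  show "(T((i, bump_col la T i x) := x)) (i, bump_col la T i x) < T (i, bump_col la T i x)"
    using bump_col_less(1)[OF c] by simp
  show "T (i, bump_col la T i x) \<le> (T((i, bump_col la T i x) := x)) (i, c')"
    if "bump_col la T i x < c'" "c' < row_len la i" for c'
    using ssyt_row_mono[OF T, of "bump_col la T i x" c' i] that by simp
qed

lemma unbump_step:
  assumes part: "is_partition la" and I: "insert_inv N la U (Suc i) y" and c_def: "c = unbump_col la U i y"
  shows "c < row_len la i" "U (i, c) < y" "insert_inv N la (U((i, c) := y)) i (U (i, c))"
proof -
  have U: "U \<in> ssyt N la" and y: "y < N" and i: "Suc i \<le> length la"
    using I by (auto simp: insert_inv_def)
  obtain j where j: "j < row_len la i" "\<forall>c\<le>j. U (i, c) < y"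
      "\<forall>c. j \<le> c \<and> c < row_len la (Suc i) \<longrightarrow> y < U (Suc i, c)"
    using I by (auto simp: insert_inv_def)
  have "U (i, j) < y" using j by simp
  note props = unbump_col_props[of j la i U y, OF j(1) this, folded c_def]
  show c: "c < row_len la i" and smaller: "U (i, c) < y" using props by auto
  have bigger: "y \<le> U (i, c')" if "c < c'" "c' < row_len la i" for c'
    using props(4)[of c'] that by force
  show "insert_inv N la (U((i, c) := y)) i (U (i, c))"
  proof (rule insert_invI[where j = c])
    show "U((i, c) := y) \<in> ssyt N la"
    proof (rule ssyt_fun_upd[OF U c y])
      show "0 < c \<Longrightarrow> U (i, c - 1) \<le> y"
        using ssyt_row_mono[OF U, of "c - 1" c i] c smaller by simp
      show "Suc c < row_len la i \<Longrightarrow> y \<le> U (i, Suc c)" using bigger by simp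
      show "0 < i \<Longrightarrow> U (i - 1, c) < y"
        using ssyt_col_less[OF U part, of c "i - 1"] c smaller by simp
      show "c < row_len la (Suc i) \<Longrightarrow> y < U (Suc i, c)" using j props(3) by auto
    qed
    show "U (i, c) < N" "i \<le> length la" using ssyt_entry_less[OF U c] i by simp_all
    show "0 < i \<Longrightarrow> c < row_len la (i - 1)" using row_len_antimono[OF part, of "i - 1" i] c by simp
    show "(U((i, c) := y)) (i - 1, c') < U (i, c)" if "0 < i" "c' \<le> c" for c'
    proof -
      have "U (i - 1, c') \<le> U (i - 1, c)"
        using ssyt_row_mono[OF U, of c' c "i - 1"] row_len_antimono[OF part, of "i - 1" i] c that by simp
      also have "\<dots> < U (i, c)" using ssyt_col_less[OF U part, of c "i - 1"] c that by simp
      finally show ?thesis using that by auto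
    qed
    show "U (i, c) < (U((i, c) := y)) (i, c')" if "c \<le> c'" "c' < row_len la i" for c'
      using bigger[of c'] smaller that by (cases "c' = c") auto
  qed
qed

lemma unbump_base:
  assumes part: "is_partition la" and ad: "addable la r" and U: "U \<in> ssyt N (add_box la r)"
  shows "insert_inv N la (U((r, row_len la r) := 0)) r (U (r, row_len la r))"
    "row_insert la (U((r, row_len la r) := 0)) r (U (r, row_len la r)) = (U, r)"
proof -
  let ?c = "row_len la r"
  have r: "r \<le> length la" using ad by (simp add: addable_def)
  note rw = row_len_add_box[OF r]
  have y: "U (r, ?c) < N" using ssyt_entry_less[OF U, of ?c r] by (simp add: rw)
  have row: "U (r, c) \<le> U (r, ?c)" if "c < ?c" for c
    using ssyt_row_mono[OF U, of c ?c r] that by (simp add: rw)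
  show "insert_inv N la (U((r, ?c) := 0)) r (U (r, ?c))"
  proof (rule insert_invI[where j = ?c])
    show "U((r, ?c) := 0) \<in> ssyt N la" "U (r, ?c) < N" "r \<le> length la"
      using ssyt_remove_corner[OF ad U] y r by simp_all
    show "0 < r \<Longrightarrow> ?c < row_len la (r - 1)" using ad by (simp add: addable_def)
    show "(U((r, ?c) := 0)) (r - 1, c) < U (r, ?c)" if "0 < r" "c \<le> ?c" for c
    proof -
      have "U (r - 1, c) \<le> U (r - 1, ?c)"
        using ssyt_row_mono[OF U, of c ?c "r - 1"] ad that by (auto simp: rw addable_def)
      also have "\<dots> < U (r, ?c)"
        using ssyt_col_less[OF U is_partition_add_box[OF part ad], of ?c "r - 1"] that by (simp add: rw)
      finally show ?thesis using that by simp
    qed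
  qed simp
  have "bump_col la (U((r, ?c) := 0)) r (U (r, ?c)) = ?c"
    by (rule bump_col_eq_row_lenI) (use row in auto)
  then show "row_insert la (U((r, ?c) := 0)) r (U (r, ?c)) = (U, r)"
    by (simp add: row_insert_stop)
qed

lemma row_insert_row_uninsert:
  "row_uninsert la V i r y = (T, x) \<Longrightarrow> is_partition la \<Longrightarrow> addable la r \<Longrightarrow> U \<in> ssyt N (add_box la r) \<Longrightarrow>
   V = U((r, row_len la r) := 0) \<Longrightarrow> y = U (r, row_len la r) \<Longrightarrow> i \<le> r \<Longrightarrow>
   insert_inv N la T i x \<and> row_insert la T i x = (U, r)"
proof (induction la V i r y arbitrary: T x rule: row_uninsert.induct)
  case (1 la V i r y)
  show ?case
  proof (cases "i < r")
    case True
    obtain U1 y1 where e1: "row_uninsert la V (Suc i) r y = (U1, y1)" by (metis surj_pair)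
    have IH: "insert_inv N la U1 (Suc i) y1 \<and> row_insert la U1 (Suc i) y1 = (U, r)"
      using 1(1)[OF True e1 1(3-7)] True by simp
    define c where "c = unbump_col la U1 i y1"
    have e: "T = U1((i, c) := y1)" "x = U1 (i, c)" using row_uninsert_less[OF True e1] 1(2) c_def by auto
    have I1: "insert_inv N la U1 (Suc i) y1" using IH ..
    note step = unbump_step[OF 1(3) I1 c_def]
    have "bump_col la T i x = c"
      using bump_col_fun_upd_less[of U1 N la c i y1] step I1 e by (simp add: insert_inv_def)
    then have "row_insert la T i x = row_insert la (T((i, c) := x)) (Suc i) (T (i, c))"
      using row_insert_bump[of la T i x] step(1) by simp
    also have "\<dots> = row_insert la U1 (Suc i) y1" using e by simp
    finally show ?thesis using IH step e by (simp add: fun_upd_def)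
  next
    case False
    then have "i = r" "T = V" "x = y" using 1(2,8) row_uninsert_ge[OF False] by auto
    then show ?thesis using unbump_base[OF 1(3,4,5)] 1(6,7) by (simp add: fun_upd_def)
  qed
qed

lemma row_uninsert_row_insert:
  "is_partition la \<Longrightarrow> insert_inv N la T i x \<Longrightarrow> row_insert la T i x = (U, r) \<Longrightarrow>
   row_uninsert la (U((r, row_len la r) := 0)) i r (U (r, row_len la r)) = (T, x)"
proof (induction la T i x arbitrary: U r rule: row_insert.induct)
  case (1 la T i x)
  note part = 1(2) and I = 1(3)
  have T: "T \<in> ssyt N la" using I by (auto simp: insert_inv_def)
  show ?case
  proof (cases "bump_col la T i x < row_len la i")
    case True
    define c where "c = bump_col la T i x"
    have c: "c < row_len la i" using True c_def by simp
    have e: "row_insert la (T((i, c) := x)) (Suc i) (T (i, c)) = (U, r)"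
      using 1(4) row_insert_bump[OF True] c_def by simp
    have IH: "row_uninsert la (U((r, row_len la r) := 0)) (Suc i) r (U (r, row_len la r)) =
        (T((i, c) := x), T (i, c))"
      by (rule 1(1)[OF c_def c part insert_inv_bump[OF part I c_def c] e])
    have "unbump_col la (T((i, c) := x)) i (T (i, c)) = c"
      using unbump_col_bump_col[OF T True] c_def by simp
    moreover have "i < r" using row_insert_row_ge[OF e] by simp
    ultimately have "row_uninsert la (U((r, row_len la r) := 0)) i r (U (r, row_len la r)) =
        (T, x)"
      using row_uninsert_less[OF _ IH] by simp
    then show ?thesis by (simp add: fun_upd_def)
  next
    case False
    then have stop: "bump_col la T i x = row_len la i" using bump_col_le[of la T i x] by simp
    have e: "U = T((i, row_len la i) := x)" "r = i" using 1(4) row_insert_stop[OF stop] by auto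
    have "T (i, row_len la i) = 0" using ssyt_outside_eq_0[OF T] by simp
    then show ?thesis using e row_uninsert_ge[of i i] by (auto simp: fun_upd_def)
  qed
qed

definition insert_tableau :: "nat list \<Rightarrow> (nat \<times> nat \<Rightarrow> nat) \<Rightarrow> nat \<Rightarrow> nat \<times> (nat \<times> nat \<Rightarrow> nat)" where
  "insert_tableau la T x = (case row_insert la T 0 x of (U, r) \<Rightarrow> (r, U))"

lemma bij_betw_insert_tableau:
  assumes part: "is_partition la"
  shows "bij_betw (\<lambda>(T, x). insert_tableau la T x) (ssyt N la \<times> {..<N})
           (SIGMA r:{r. addable la r}. ssyt N (add_box la r))"
  unfolding bij_betw_def
proof (intro conjI)
  show "inj_on (\<lambda>(T, x). insert_tableau la T x) (ssyt N la \<times> {..<N})"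
  proof (rule inj_onI, clarify)
    fix T x T' x' assume h: "T \<in> ssyt N la" "x < N" "T' \<in> ssyt N la" "x' < N"
      and eq: "insert_tableau la T x = insert_tableau la T' x'"
    obtain U r where e: "row_insert la T 0 x = (U, r)" by (metis surj_pair)
    obtain U' r' where e': "row_insert la T' 0 x' = (U', r')" by (metis surj_pair)
    have "U' = U" "r' = r" using eq e e' by (auto simp: insert_tableau_def)
    then show "T = T' \<and> x = x'"
      using row_uninsert_row_insert[OF part _ e] row_uninsert_row_insert[OF part _ e'] h
      by (simp add: insert_inv_0)
  qed
next
  show "(\<lambda>(T, x). insert_tableau la T x) ` (ssyt N la \<times> {..<N}) = (SIGMA r:{r. addable la r}. ssyt N (add_box la r))"
  proof (intro equalityI subsetI)
    fix p assume "p \<in> (\<lambda>(T, x). insert_tableau la T x) ` (ssyt N la \<times> {..<N})"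
    then obtain T x where h: "T \<in> ssyt N la" "x < N" "p = insert_tableau la T x" by auto
    obtain U r where e: "row_insert la T 0 x = (U, r)" by (metis surj_pair)
    show "p \<in> (SIGMA r:{r. addable la r}. ssyt N (add_box la r))"
      using row_insert_correct[OF part _ e] h e by (simp add: insert_inv_0 insert_tableau_def)
  next
    fix p assume "p \<in> (SIGMA r:{r. addable la r}. ssyt N (add_box la r))"
    then obtain r U where h: "p = (r, U)" "addable la r" "U \<in> ssyt N (add_box la r)" by auto
    obtain T x where e: "row_uninsert la (U((r, row_len la r) := 0)) 0 r (U (r, row_len la r)) = (T, x)"
      by (metis surj_pair)
    have "insert_inv N la T 0 x \<and> row_insert la T 0 x = (U, r)"
      by (rule row_insert_row_uninsert[OF e part h(2,3) refl refl]) simp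
    then show "p \<in> (\<lambda>(T, x). insert_tableau la T x) ` (ssyt N la \<times> {..<N})"
      using h by (auto simp: insert_inv_0 insert_tableau_def intro!: image_eqI[of _ _ "(T, x)"])
  qed
qed

section \<open>The row bumping lemma\<close>

lemma bump_col_after_bump_le:
  assumes T: "T \<in> ssyt N la" and c: "bump_col la T i x < row_len la i" and "x \<le> z"
    and S: "\<And>c'. S (i, c') = (T((i, bump_col la T i x) := x)) (i, c')"
    and len: "row_len mu i = row_len la i" and c2: "bump_col mu S i z < row_len mu i"
  shows "T (i, bump_col la T i x) \<le> S (i, bump_col mu S i z)"
proof -
  define c1 where "c1 = bump_col la T i x"
  define c2 where "c2 = bump_col mu S i z"
  have "z < S (i, c2)" using bump_col_less(1)[OF c2] c2_def by simp
  moreover have "S (i, c') \<le> z" if "c' \<le> c1" for c'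
    using bump_col_less(2)[OF c, of c'] S[of c'] \<open>x \<le> z\<close> that c1_def by (cases "c' = c1") auto
  ultimately have "c1 < c2" by (meson not_le)
  then show ?thesis
    using ssyt_row_mono[OF T, of c1 c2 i] S[of c2] c2 len c1_def c2_def by simp
qed

lemma bump_col_after_bump_gt:
  assumes T: "T \<in> ssyt N la" and c: "bump_col la T i x < row_len la i" and "z < x"
    and S: "\<And>c'. S (i, c') = (T((i, bump_col la T i x) := x)) (i, c')"
    and len: "row_len mu i = row_len la i"
  shows "bump_col mu S i z < row_len mu i" and "S (i, bump_col mu S i z) < T (i, bump_col la T i x)"
proof -
  define c1 where "c1 = bump_col la T i x"
  define c2 where "c2 = bump_col mu S i z"
  have "c2 \<le> c1" using bump_col_le_of_less[of z S i c1 mu] S[of c1] \<open>z < x\<close> c1_def c2_def by simp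
  then show "bump_col mu S i z < row_len mu i" using c len c1_def c2_def by simp
  have "x < T (i, c1)" using bump_col_less(1)[OF c] c1_def by simp
  moreover have "c2 < c1 \<Longrightarrow> T (i, c2) \<le> x" using bump_col_less(2)[OF c] c1_def by simp
  ultimately show "S (i, c2) < T (i, c1)" using S[of c2] \<open>c2 \<le> c1\<close> c1_def by (cases "c2 = c1") auto
qed

lemma bump_col_after_stop_le:
  assumes stop: "bump_col la T i x = row_len la i" and "x \<le> z"
    and S: "\<And>c. S (i, c) = (T((i, row_len la i) := x)) (i, c)"
    and len: "row_len mu i = Suc (row_len la i)"
  shows "bump_col mu S i z = row_len mu i"
proof (rule bump_col_eq_row_lenI)
  fix c assume "c < row_len mu i"
  then show "S (i, c) \<le> z"
    using S[of c] bump_col_eq_row_lenD[OF stop, of c] \<open>x \<le> z\<close> len by (cases "c = row_len la i") auto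
qed

lemma bump_col_after_stop_gt:
  assumes "z < x" and S: "\<And>c. S (i, c) = (T((i, row_len la i) := x)) (i, c)"
    and len: "row_len mu i = Suc (row_len la i)"
  shows "bump_col mu S i z < row_len mu i"
  using bump_col_le_of_less[of z S i "row_len la i" mu] S \<open>z < x\<close> len by simp

lemma row_insert_bump_row:
  assumes c: "bump_col la T i x < row_len la i" and e: "row_insert la T i x = (U, r)"
  shows "Suc i \<le> r" and "U (i, c') = (T((i, bump_col la T i x) := x)) (i, c')"
proof -
  have "row_insert la (T((i, bump_col la T i x) := x)) (Suc i) (T (i, bump_col la T i x)) = (U, r)"
    using e row_insert_bump[OF c] by simp
  from row_insert_row_ge[OF this] row_insert_keeps_upper[OF this, of i c']
  show "Suc i \<le> r" and "U (i, c') = (T((i, bump_col la T i x) := x)) (i, c')" by simp_all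
qed

text \<open>The row bumping lemma: after inserting \<^term>\<open>x\<close> and then \<^term>\<open>z\<close>, the second new box
  lies weakly above the first iff \<^term>\<open>x \<le> z\<close>.  The hypothesis on \<^term>\<open>S\<close> allows the rows
  above \<^term>\<open>i\<close> to have been changed already by the insertion of \<^term>\<open>z\<close>.\<close>

lemma row_bumping_le:
  "is_partition la \<Longrightarrow> insert_inv N la T i x \<Longrightarrow> row_insert la T i x = (U, r) \<Longrightarrow>
   (\<forall>j c. i \<le> j \<longrightarrow> S (j, c) = U (j, c)) \<Longrightarrow> x \<le> z \<Longrightarrow>
   row_insert (add_box la r) S i z = (S', r') \<Longrightarrow> r' \<le> r"
proof (induction la T i x arbitrary: U r S z S' r' rule: row_insert.induct)
  case (1 la T i x)
  note part = 1(2) and I = 1(3) and S = 1(5)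
  have T: "T \<in> ssyt N la" and i: "i \<le> length la" using I by (auto simp: insert_inv_def)
  have r: "r \<le> length la" using row_insert_correct[OF part I 1(4)] by (simp add: addable_def)
  show ?case
  proof (cases "bump_col la T i x < row_len la i")
    case True
    define c where "c = bump_col la T i x"
    have c: "c < row_len la i" using True c_def by simp
    have e: "row_insert la (T((i, c) := x)) (Suc i) (T (i, c)) = (U, r)"
      using 1(4) row_insert_bump[OF True] c_def by simp
    note row_i = row_insert_bump_row[OF True 1(4)]
    have len: "row_len (add_box la r) i = row_len la i" using row_len_add_box[OF r] row_i(1) by simp
    have Si: "S (i, c') = (T((i, bump_col la T i x) := x)) (i, c')" for c'
      using S row_i(2)[of c'] by simp
    show ?thesis
    proof (cases "bump_col (add_box la r) S i z < row_len (add_box la r) i")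
      case False
      then have "bump_col (add_box la r) S i z = row_len (add_box la r) i"
        using bump_col_le[of "add_box la r" S i z] by simp
      then have "r' = i" using row_insert_stop[of "add_box la r" S i z] 1(7) by simp
      then show ?thesis using row_i(1) by simp
    next
      case c2: True
      have "row_insert (add_box la r) (S((i, bump_col (add_box la r) S i z) := z)) (Suc i)
          (S (i, bump_col (add_box la r) S i z)) = (S', r')"
        using 1(7) row_insert_bump[OF c2] by simp
      moreover have "T (i, c) \<le> S (i, bump_col (add_box la r) S i z)"
        using bump_col_after_bump_le[OF T True 1(6) Si len c2] c_def by simp
      ultimately show ?thesis
        by (intro 1(1)[OF c_def c part insert_inv_bump[OF part I c_def c] e]) (use S in auto)
    qed
  next
    case False
    then have stop: "bump_col la T i x = row_len la i" using bump_col_le[of la T i x] by simp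
    have e: "U = T((i, row_len la i) := x)" "r = i" using 1(4) row_insert_stop[OF stop] by auto
    have "bump_col (add_box la r) S i z = row_len (add_box la r) i"
      by (rule bump_col_after_stop_le[OF stop 1(6)]) (use S e row_len_add_box[OF i] in auto)
    then show ?thesis using row_insert_stop[of "add_box la r" S i z] 1(7) e by simp
  qed
qed

lemma row_bumping_gt:
  "is_partition la \<Longrightarrow> insert_inv N la T i x \<Longrightarrow> row_insert la T i x = (U, r) \<Longrightarrow>
   (\<forall>j c. i \<le> j \<longrightarrow> S (j, c) = U (j, c)) \<Longrightarrow> z < x \<Longrightarrow>
   row_insert (add_box la r) S i z = (S', r') \<Longrightarrow> r < r'"
proof (induction la T i x arbitrary: U r S z S' r' rule: row_insert.induct)
  case (1 la T i x)
  note part = 1(2) and I = 1(3) and S = 1(5)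
  have T: "T \<in> ssyt N la" and i: "i \<le> length la" using I by (auto simp: insert_inv_def)
  have r: "r \<le> length la" using row_insert_correct[OF part I 1(4)] by (simp add: addable_def)
  show ?case
  proof (cases "bump_col la T i x < row_len la i")
    case True
    define c where "c = bump_col la T i x"
    have c: "c < row_len la i" using True c_def by simp
    have e: "row_insert la (T((i, c) := x)) (Suc i) (T (i, c)) = (U, r)"
      using 1(4) row_insert_bump[OF True] c_def by simp
    note row_i = row_insert_bump_row[OF True 1(4)]
    have len: "row_len (add_box la r) i = row_len la i" using row_len_add_box[OF r] row_i(1) by simp
    have Si: "S (i, c') = (T((i, bump_col la T i x) := x)) (i, c')" for c'
      using S row_i(2)[of c'] by simp
    note c2 = bump_col_after_bump_gt[OF T True 1(6) Si len, folded c_def]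
    have "row_insert (add_box la r) (S((i, bump_col (add_box la r) S i z) := z)) (Suc i)
        (S (i, bump_col (add_box la r) S i z)) = (S', r')"
      using 1(7) row_insert_bump[OF c2(1)] by simp
    then show ?thesis
      by (intro 1(1)[OF c_def c part insert_inv_bump[OF part I c_def c] e _ c2(2)]) (use S in auto)
  next
    case False
    then have stop: "bump_col la T i x = row_len la i" using bump_col_le[of la T i x] by simp
    have e: "U = T((i, row_len la i) := x)" "r = i" using 1(4) row_insert_stop[OF stop] by auto
    have "bump_col (add_box la r) S i z < row_len (add_box la r) i"
      by (rule bump_col_after_stop_gt[OF 1(6)]) (use S e row_len_add_box[OF i] in auto)
    then have "Suc i \<le> r'" using row_insert_row_ge 1(7) row_insert_bump by metis
    then show ?thesis using e by simp
  qed
qed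

section \<open>Multiplying Schur polynomials by h_2 and e_2\<close>

lemma mono_mult_mono: "mono a * mono b = mono (a + b)"
  by (simp add: mono_def mult_single)

definition pair_sum :: "nat \<Rightarrow> (nat \<Rightarrow> nat \<Rightarrow> bool) \<Rightarrow> spoly" where
  "pair_sum N P = (\<Sum>a<N. \<Sum>b<N. if P a b then mono (Poly_Mapping.single a 1 + Poly_Mapping.single b 1) else 0)"

definition h2 :: "nat \<Rightarrow> spoly" where "h2 N = pair_sum N (\<lambda>a b. a \<le> b)"

definition e2 :: "nat \<Rightarrow> spoly" where "e2 N = pair_sum N (\<lambda>a b. b < a)"

lemma insert_tableau_props:
  assumes part: "is_partition la" and T: "T \<in> ssyt N la" and a: "a < N"
    and ins: "insert_tableau la T a = (r, U)"
  shows "addable la r" "U \<in> ssyt N (add_box la r)"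
    "content (add_box la r) U = content la T + Poly_Mapping.single a 1"
proof -
  have "row_insert la T 0 a = (U, r)"
    using ins by (auto simp: insert_tableau_def split: prod.splits)
  from row_insert_correct[OF part _ this] T a
  show "addable la r" "U \<in> ssyt N (add_box la r)"
    "content (add_box la r) U = content la T + Poly_Mapping.single a 1"
    by (auto simp: insert_inv_0)
qed

lemma sum_insert_tableau_reindex:
  assumes part: "is_partition la"
    and eq: "\<And>T a. T \<in> ssyt N la \<Longrightarrow> a < N \<Longrightarrow> F T a = case_prod G (insert_tableau la T a)"
  shows "(\<Sum>T\<in>ssyt N la. \<Sum>a<N. F T a) = (\<Sum>r\<in>{r. addable la r}. \<Sum>U\<in>ssyt N (add_box la r). G r U)"
proof -
  have "(\<Sum>T\<in>ssyt N la. \<Sum>a<N. F T a) =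
      (\<Sum>p\<in>ssyt N la \<times> {..<N}. case_prod G ((\<lambda>(T, a). insert_tableau la T a) p))"
    unfolding sum.cartesian_product by (intro sum.cong refl) (auto simp: eq)
  also have "\<dots> = (\<Sum>q\<in>(SIGMA r:{r. addable la r}. ssyt N (add_box la r)). case_prod G q)"
    by (rule sum.reindex_bij_betw[OF bij_betw_insert_tableau[OF part]])
  also have "\<dots> = (\<Sum>r\<in>{r. addable la r}. \<Sum>U\<in>ssyt N (add_box la r). G r U)"
    using sum.Sigma[of "{r. addable la r}" "\<lambda>r. ssyt N (add_box la r)" G]
      finite_addable finite_ssyt by simp
  finally show ?thesis .
qed

lemma sum_ssyt_insert_letter:
  assumes "is_partition la"
  shows "(\<Sum>T\<in>ssyt N la. \<Sum>a<N. if Q (fst (insert_tableau la T a))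
            then mono (content la T + Poly_Mapping.single a 1) else 0) =
    (\<Sum>r\<in>{r. addable la r}. if Q r then schur N (add_box la r) else 0)"
proof -
  have "(\<Sum>T\<in>ssyt N la. \<Sum>a<N. if Q (fst (insert_tableau la T a))
            then mono (content la T + Poly_Mapping.single a 1) else 0) =
      (\<Sum>r\<in>{r. addable la r}. \<Sum>U\<in>ssyt N (add_box la r). if Q r then mono (content (add_box la r) U) else 0)"
  proof (rule sum_insert_tableau_reindex[OF assms])
    fix T a assume "T \<in> ssyt N la" "a < N"
    then show "(if Q (fst (insert_tableau la T a)) then mono (content la T + Poly_Mapping.single a 1) else 0) =
        (case insert_tableau la T a of (r, U) \<Rightarrow> if Q r then mono (content (add_box la r) U) else 0)"
      using insert_tableau_props[OF assms] by (auto split: prod.splits)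
  qed
  also have "\<dots> = (\<Sum>r\<in>{r. addable la r}. if Q r then schur N (add_box la r) else 0)"
    unfolding schur_def by (intro sum.cong refl) auto
  finally show ?thesis .
qed

lemma pair_sum_mult_schur:
  assumes part: "is_partition la"
    and PQ: "\<And>T a b r T' r' U. T \<in> ssyt N la \<Longrightarrow> a < N \<Longrightarrow> b < N \<Longrightarrow>
       insert_tableau la T a = (r, T') \<Longrightarrow> insert_tableau (add_box la r) T' b = (r', U) \<Longrightarrow>
       P a b \<longleftrightarrow> Q r r'"
  shows "pair_sum N P * schur N la = (\<Sum>r\<in>{r. addable la r}. \<Sum>r'\<in>{r'. addable (add_box la r) r'}.
            if Q r r' then schur N (add_box (add_box la r) r') else 0)"
proof -
  define G where "G = (\<lambda>r T'. \<Sum>b<N. if Q r (fst (insert_tableau (add_box la r) T' b)) then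
      mono (content (add_box la r) T' + Poly_Mapping.single b 1) else 0)"
  have "pair_sum N P * schur N la = (\<Sum>T\<in>ssyt N la. pair_sum N P * mono (content la T))"
    by (simp add: schur_def sum_distrib_left)
  also have "\<dots> = (\<Sum>T\<in>ssyt N la. \<Sum>a<N. \<Sum>b<N. if P a b then
      mono (content la T + Poly_Mapping.single a 1 + Poly_Mapping.single b 1) else 0)"
    unfolding pair_sum_def sum_distrib_right by (intro sum.cong refl) (simp add: mono_mult_mono add_ac)
  also have "\<dots> = (\<Sum>r\<in>{r. addable la r}. \<Sum>T'\<in>ssyt N (add_box la r). G r T')"
  proof (rule sum_insert_tableau_reindex[OF part])
    fix T a assume T: "T \<in> ssyt N la" and a: "a < N"
    obtain r T' where ins: "insert_tableau la T a = (r, T')" by fastforce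
    have "P a b \<longleftrightarrow> Q r (fst (insert_tableau (add_box la r) T' b))" if "b < N" for b
      using PQ[OF T a that ins] by (metis prod.collapse)
    then show "(\<Sum>b<N. if P a b then mono (content la T + Poly_Mapping.single a 1 + Poly_Mapping.single b 1) else 0)
       = case_prod G (insert_tableau la T a)"
      unfolding G_def using insert_tableau_props(3)[OF part T a ins] ins by (auto intro!: sum.cong)
  qed
  also have "\<dots> = (\<Sum>r\<in>{r. addable la r}. \<Sum>r'\<in>{r'. addable (add_box la r) r'}.
            if Q r r' then schur N (add_box (add_box la r) r') else 0)"
    unfolding G_def by (intro sum.cong refl) (auto intro: sum_ssyt_insert_letter is_partition_add_box[OF part])
  finally show ?thesis .
qed

lemma row_bumping_insert_tableau:
  assumes part: "is_partition la" and T: "T \<in> ssyt N la" and a: "a < N"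
    and ins1: "insert_tableau la T a = (r, T')" and ins2: "insert_tableau (add_box la r) T' b = (r', U)"
  shows "a \<le> b \<longleftrightarrow> r' \<le> r" and "b < a \<longleftrightarrow> r < r'"
proof -
  have e1: "row_insert la T 0 a = (T', r)" and e2: "row_insert (add_box la r) T' 0 b = (U, r')"
    using ins1 ins2 by (auto simp: insert_tableau_def split: prod.splits)
  have I: "insert_inv N la T 0 a" using T a by (simp add: insert_inv_0)
  have "a \<le> b \<Longrightarrow> r' \<le> r" using row_bumping_le[OF part I e1 _ _ e2] by simp
  moreover have "b < a \<Longrightarrow> r < r'" using row_bumping_gt[OF part I e1 _ _ e2] by simp
  ultimately show "a \<le> b \<longleftrightarrow> r' \<le> r" and "b < a \<longleftrightarrow> r < r'" by (auto simp: not_le[symmetric])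
qed

lemma h2_mult_schur: "is_partition la \<Longrightarrow> h2 N * schur N la =
    (\<Sum>r\<in>{r. addable la r}. \<Sum>r'\<in>{r'. addable (add_box la r) r'}.
      if r' \<le> r then schur N (add_box (add_box la r) r') else 0)"
  unfolding h2_def by (rule pair_sum_mult_schur) (assumption, rule row_bumping_insert_tableau(1))

lemma e2_mult_schur: "is_partition la \<Longrightarrow> e2 N * schur N la =
    (\<Sum>r\<in>{r. addable la r}. \<Sum>r'\<in>{r'. addable (add_box la r) r'}.
      if r < r' then schur N (add_box (add_box la r) r') else 0)"
  unfolding e2_def by (rule pair_sum_mult_schur) (assumption, rule row_bumping_insert_tableau(2))

lemma schur_positive_0: "schur_positive N 0"
  unfolding schur_positive_def by (rule exI[of _ "{}"]) simp

lemma schur_positive_schur: "is_partition la \<Longrightarrow> schur_positive N (schur N la)"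
  unfolding schur_positive_def by (intro exI[of _ "{la}"] exI[of _ "\<lambda>_. 1"]) simp

lemma schur_Nil: "schur N [] = 1"
proof -
  have "ssyt N [] = {\<lambda>_. 0}" by (auto simp: ssyt_def cells_def)
  then show ?thesis by (simp add: schur_def content_def cells_def mono_def)
qed

lemma schur_positive_1: "schur_positive N 1"
  using schur_positive_schur[of "[]" N] by (simp add: schur_Nil is_partition_def)

lemma schur_positive_add:
  assumes "schur_positive N f" "schur_positive N g"
  shows "schur_positive N (f + g)"
proof -
  obtain S1 c1 where 1: "finite S1" "\<forall>la\<in>S1. is_partition la" "f = (\<Sum>la\<in>S1. of_nat (c1 la) * schur N la)"
    using assms(1) unfolding schur_positive_def by blast
  obtain S2 c2 where 2: "finite S2" "\<forall>la\<in>S2. is_partition la" "g = (\<Sum>la\<in>S2. of_nat (c2 la) * schur N la)"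
    using assms(2) unfolding schur_positive_def by blast
  define c where "c la = (if la \<in> S1 then c1 la else 0) + (if la \<in> S2 then c2 la else 0)" for la
  have "(\<Sum>la\<in>S1 \<union> S2. of_nat (c la) * schur N la) =
     (\<Sum>la\<in>S1 \<union> S2. if la \<in> S1 then of_nat (c1 la) * schur N la else 0) +
     (\<Sum>la\<in>S1 \<union> S2. if la \<in> S2 then of_nat (c2 la) * schur N la else 0)"
    unfolding c_def by (simp add: sum.distrib[symmetric] distrib_right) (intro sum.cong refl, auto)
  also have "\<dots> = f + g"
    using 1 2 sum.inter_restrict[of "S1 \<union> S2" "\<lambda>la. of_nat (c1 la) * schur N la" S1]
      sum.inter_restrict[of "S1 \<union> S2" "\<lambda>la. of_nat (c2 la) * schur N la" S2]
    by (simp add: Int_absorb1 Int_absorb2)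
  finally show ?thesis unfolding schur_positive_def using 1 2
    by (intro exI[of _ "S1 \<union> S2"] exI[of _ c]) auto
qed

lemma schur_positive_sum:
  "finite I \<Longrightarrow> (\<And>i. i \<in> I \<Longrightarrow> schur_positive N (g i)) \<Longrightarrow> schur_positive N (\<Sum>i\<in>I. g i)"
  by (induction I rule: finite_induct) (auto simp: schur_positive_0 schur_positive_add)

lemma schur_positive_if: "(b \<Longrightarrow> schur_positive N f) \<Longrightarrow> schur_positive N (if b then f else 0)"
  by (auto simp: schur_positive_0)

lemma schur_positive_of_nat_mult: "schur_positive N f \<Longrightarrow> schur_positive N (of_nat n * f)"
  by (induction n) (auto simp: schur_positive_0 schur_positive_add distrib_right)

lemma schur_positive_mult:
  assumes g: "\<And>la. is_partition la \<Longrightarrow> schur_positive N (g * schur N la)"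
    and f: "schur_positive N f"
  shows "schur_positive N (g * f)"
proof -
  obtain S c where S: "finite S" "\<forall>la\<in>S. is_partition la" and "f = (\<Sum>la\<in>S. of_nat (c la) * schur N la)"
    using f unfolding schur_positive_def by blast
  then have "g * f = (\<Sum>la\<in>S. of_nat (c la) * (g * schur N la))"
    by (simp add: sum_distrib_left mult_ac)
  also have "schur_positive N \<dots>"
    using S g by (intro schur_positive_sum schur_positive_of_nat_mult) auto
  finally show ?thesis .
qed

lemma schur_positive_two_boxes:
  "is_partition la \<Longrightarrow> schur_positive N (\<Sum>r\<in>{r. addable la r}. \<Sum>r'\<in>{r'. addable (add_box la r) r'}.
      if Q r r' then schur N (add_box (add_box la r) r') else 0)"
  by (intro schur_positive_sum schur_positive_if schur_positive_schur is_partition_add_box)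
    (auto simp: finite_addable)

lemma schur_positive_h2_power_e2_power: "schur_positive N (h2 N ^ a * e2 N ^ b)"
proof -
  have "schur_positive N (e2 N ^ b)"
    by (induction b) (auto simp: schur_positive_1 e2_mult_schur schur_positive_two_boxes
        intro: schur_positive_mult)
  then show ?thesis
    by (induction a) (auto simp: mult.assoc h2_mult_schur schur_positive_two_boxes
        intro: schur_positive_mult)
qed

section \<open>A telescoping identity\<close>

definition complete_sum :: "'a::comm_ring_1 \<Rightarrow> 'a \<Rightarrow> nat \<Rightarrow> 'a" where
  "complete_sum x y n = (\<Sum>i\<le>n. y ^ i * x ^ (n - i))"

definition even_binom_part :: "'a::comm_ring_1 \<Rightarrow> 'a \<Rightarrow> nat \<Rightarrow> 'a" where
  "even_binom_part h e n = (\<Sum>i\<le>n. if even i then of_nat (n choose i) * (e ^ i * h ^ (n - i)) else 0)"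

lemma complete_sum_Suc_left: "complete_sum x y (Suc n) = x * complete_sum x y n + y ^ Suc n"
proof -
  have "complete_sum x y (Suc n) = (\<Sum>i\<le>n. y ^ i * x ^ (Suc n - i)) + y ^ Suc n"
    by (simp add: complete_sum_def)
  also have "(\<Sum>i\<le>n. y ^ i * x ^ (Suc n - i)) = x * complete_sum x y n"
    unfolding complete_sum_def sum_distrib_left by (intro sum.cong refl) (simp add: Suc_diff_le mult_ac)
  finally show ?thesis .
qed

lemma complete_sum_Suc_right: "complete_sum x y (Suc n) = x ^ Suc n + y * complete_sum x y n"
proof -
  have "complete_sum x y (Suc n) = x ^ Suc n + (\<Sum>i\<le>n. y ^ Suc i * x ^ (Suc n - Suc i))"
    unfolding complete_sum_def by (subst sum.atMost_Suc_shift) simp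
  also have "(\<Sum>i\<le>n. y ^ Suc i * x ^ (Suc n - Suc i)) = y * complete_sum x y n"
    unfolding complete_sum_def sum_distrib_left by (intro sum.cong refl) (simp add: mult_ac)
  finally show ?thesis .
qed

lemma even_binom_part_double: "even_binom_part h e n + even_binom_part h e n = (h + e) ^ n + (h - e) ^ n"
proof -
  have "(h + e) ^ n + (h - e) ^ n = (e + h) ^ n + (- e + h) ^ n" by (simp add: add.commute)
  also have "\<dots> = (\<Sum>i\<le>n. of_nat (n choose i) * e ^ i * h ^ (n - i) + of_nat (n choose i) * (- e) ^ i * h ^ (n - i))"
    unfolding binomial_ring sum.distrib ..
  also have "\<dots> = (\<Sum>i\<le>n. (if even i then of_nat (n choose i) * (e ^ i * h ^ (n - i)) else 0) +
      (if even i then of_nat (n choose i) * (e ^ i * h ^ (n - i)) else 0))"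
    by (intro sum.cong refl) (simp add: power_minus_odd mult_ac)
  finally show ?thesis unfolding even_binom_part_def sum.distrib by simp
qed

text \<open>Dividing by 2 is the only non-ring step, hence the cancellation hypothesis.\<close>

lemma complete_sum_Suc_diff:
  fixes h e :: "'a::comm_ring_1"
  assumes cancel: "\<And>u v::'a. u + u = v + v \<Longrightarrow> u = v"
  shows "complete_sum (h + e) (h - e) (Suc n) - h * complete_sum (h + e) (h - e) n = even_binom_part h e (Suc n)"
proof (rule cancel)
  let ?x = "h + e" and ?y = "h - e" and ?G = "complete_sum (h + e) (h - e)"
  have "(?G (Suc n) - h * ?G n) + (?G (Suc n) - h * ?G n) =
      (?x * ?G n + ?y ^ Suc n) + (?x ^ Suc n + ?y * ?G n) - (?x + ?y) * ?G n"
    unfolding complete_sum_Suc_left[symmetric] complete_sum_Suc_right[symmetric] by (simp add: algebra_simps)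
  also have "\<dots> = ?x ^ Suc n + ?y ^ Suc n" by (simp add: algebra_simps)
  also have "\<dots> = even_binom_part h e (Suc n) + even_binom_part h e (Suc n)"
    by (simp add: even_binom_part_double)
  finally show "(?G (Suc n) - h * ?G n) + (?G (Suc n) - h * ?G n) =
      even_binom_part h e (Suc n) + even_binom_part h e (Suc n)" .
qed

lemma complete_sum_diff_power_mult:
  fixes h e :: "'a::comm_ring_1"
  assumes cancel: "\<And>u v::'a. u + u = v + v \<Longrightarrow> u = v" and "k \<le> n"
  shows "complete_sum (h + e) (h - e) n - h ^ k * complete_sum (h + e) (h - e) (n - k) =
    (\<Sum>j<k. h ^ j * even_binom_part h e (n - j))"
  using \<open>k \<le> n\<close>
proof (induction k)
  case (Suc k)
  let ?G = "complete_sum (h + e) (h - e)"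
  have "n - k = Suc (n - Suc k)" using Suc.prems by simp
  then have step: "?G (n - k) - h * ?G (n - Suc k) = even_binom_part h e (n - k)"
    using complete_sum_Suc_diff[OF cancel, of h e "n - Suc k"] by simp
  have "?G n - h ^ Suc k * ?G (n - Suc k) =
      (?G n - h ^ k * ?G (n - k)) + h ^ k * (?G (n - k) - h * ?G (n - Suc k))"
    by (simp add: algebra_simps)
  also have "\<dots> = (\<Sum>j<k. h ^ j * even_binom_part h e (n - j)) + h ^ k * even_binom_part h e (n - k)"
    using Suc step by simp
  finally show ?case by simp
qed simp

lemma double_cancel_poly_mapping: "(u::'a \<Rightarrow>\<^sub>0 int) + u = v + v \<Longrightarrow> u = v"
  by (metis lookup_add poly_mapping_eqI mult_2[symmetric] mult_cancel_left zero_neq_numeral)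

lemma psum_1_squared: "psum N 1 ^ 2 = h2 N + e2 N"
proof -
  have "psum N 1 ^ 2 = (\<Sum>a<N. \<Sum>b<N. mono (Poly_Mapping.single a 1 + Poly_Mapping.single b 1))"
    unfolding psum_def var_pow_def power2_eq_square sum_product by (simp add: mono_mult_mono)
  also have "\<dots> = h2 N + e2 N"
    unfolding h2_def e2_def pair_sum_def sum.distrib[symmetric] by (intro sum.cong refl) auto
  finally show ?thesis .
qed

lemma psum_2_eq: "psum N 2 = h2 N - e2 N"
proof -
  let ?m = "\<lambda>a b. mono (Poly_Mapping.single a 1 + Poly_Mapping.single b 1)"
  define L where "L = (\<Sum>a<N. \<Sum>b<N. if a < b then ?m a b else 0)"
  have "h2 N = (\<Sum>a<N. \<Sum>b<N. (if a = b then ?m a b else 0) + (if a < b then ?m a b else 0))"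
    unfolding h2_def pair_sum_def by (intro sum.cong refl) auto
  also have "\<dots> = (\<Sum>a<N. ?m a a) + L"
    unfolding L_def sum.distrib by simp
  finally have "h2 N = (\<Sum>a<N. ?m a a) + L" .
  moreover have "e2 N = L"
    unfolding e2_def pair_sum_def L_def by (subst sum.swap) (intro sum.cong refl, simp add: add.commute)
  moreover have "psum N 2 = (\<Sum>a<N. ?m a a)"
    by (simp add: psum_def var_pow_def single_add[symmetric] numeral_2_eq_2)
  ultimately show ?thesis by simp
qed

lemma mdeg_add: "mdeg (a + b) = mdeg a + mdeg b"
  unfolding mdeg_def by (rule setsum_keys_plus_distrib) auto

lemma mdeg_single: "mdeg (Poly_Mapping.single a n) = n"
  by (simp add: mdeg_def)

lemma mdeg_eq_0_iff: "mdeg a = 0 \<longleftrightarrow> a = 0"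
  by (auto simp: mdeg_def in_keys_iff intro: poly_mapping_eqI)

lemma mdeg_Suc_E:
  assumes "mdeg a = Suc n"
  obtains x b where "x \<in> Poly_Mapping.keys a" "a = Poly_Mapping.single x 1 + b" "mdeg b = n"
    "Poly_Mapping.keys b \<subseteq> Poly_Mapping.keys a"
proof -
  obtain x where x: "x \<in> Poly_Mapping.keys a" using assms mdeg_eq_0_iff[of a] by fastforce
  define b where "b = a - Poly_Mapping.single x 1"
  have "a = Poly_Mapping.single x 1 + b"
    using x by (intro poly_mapping_eqI) (auto simp: b_def lookup_add lookup_minus lookup_single in_keys_iff when_def)
  moreover have "Poly_Mapping.keys b \<subseteq> Poly_Mapping.keys a"
    by (auto simp: b_def in_keys_iff lookup_minus)
  moreover have "mdeg b = n" using assms calculation(1) mdeg_add[of "Poly_Mapping.single x 1" b]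
    by (simp add: mdeg_single)
  ultimately show ?thesis using x that by blast
qed

lemma single_add_single_inj:
  fixes a b a' b' :: nat
  assumes "a \<le> b" "a' \<le> b'"
    and eq: "Poly_Mapping.single a (1::nat) + Poly_Mapping.single b 1 = Poly_Mapping.single a' 1 + Poly_Mapping.single b' 1"
  shows "a = a' \<and> b = b'"
proof -
  have count: "(1 when a = k) + (1 when b = k) = (1 when a' = k) + ((1::nat) when b' = k)" for k
    using arg_cong[OF eq, of "\<lambda>m. Poly_Mapping.lookup m k"] by (simp add: lookup_add lookup_single)
  show ?thesis
    using count[of a] count[of b] count[of a'] assms(1,2) by (auto simp: when_def split: if_splits)
qed

lemma bij_betw_pairs_mdeg_2:
  "bij_betw (\<lambda>(a, b). Poly_Mapping.single a 1 + Poly_Mapping.single b 1) {(a, b). a \<le> b \<and> b < N}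
     {\<alpha>. Poly_Mapping.keys \<alpha> \<subseteq> {..<N} \<and> mdeg \<alpha> = 2}"
  unfolding bij_betw_def
proof (intro conjI)
  show "inj_on (\<lambda>(a, b). Poly_Mapping.single a (1::nat) + Poly_Mapping.single b 1) {(a, b). a \<le> b \<and> b < N}"
  proof (rule inj_onI)
    fix p q assume "p \<in> {(a, b). a \<le> b \<and> b < N}" "q \<in> {(a, b). a \<le> b \<and> b < N}"
      "(\<lambda>(a, b). Poly_Mapping.single a (1::nat) + Poly_Mapping.single b 1) p =
       (\<lambda>(a, b). Poly_Mapping.single a 1 + Poly_Mapping.single b 1) q"
    then show "p = q" using single_add_single_inj by (cases p; cases q) auto
  qed
  show "(\<lambda>(a, b). Poly_Mapping.single a (1::nat) + Poly_Mapping.single b 1) ` {(a, b). a \<le> b \<and> b < N} =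
      {\<alpha>. Poly_Mapping.keys \<alpha> \<subseteq> {..<N} \<and> mdeg \<alpha> = 2}"
  proof (intro equalityI subsetI)
    fix \<alpha> :: "nat \<Rightarrow>\<^sub>0 nat" assume "\<alpha> \<in> (\<lambda>(a, b). Poly_Mapping.single a 1 + Poly_Mapping.single b 1) ` {(a, b). a \<le> b \<and> b < N}"
    then obtain a b where ab: "a \<le> b" "b < N" "\<alpha> = Poly_Mapping.single a 1 + Poly_Mapping.single b 1"
      by auto
    have "Poly_Mapping.keys \<alpha> \<subseteq> {a, b}"
      unfolding ab(3) by (auto simp: in_keys_iff lookup_add lookup_single when_def split: if_splits)
    then show "\<alpha> \<in> {\<alpha>. Poly_Mapping.keys \<alpha> \<subseteq> {..<N} \<and> mdeg \<alpha> = 2}"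
      using ab by (auto simp: mdeg_add mdeg_single)
  next
    fix \<alpha> :: "nat \<Rightarrow>\<^sub>0 nat" assume "\<alpha> \<in> {\<alpha>. Poly_Mapping.keys \<alpha> \<subseteq> {..<N} \<and> mdeg \<alpha> = 2}"
    then have keys: "Poly_Mapping.keys \<alpha> \<subseteq> {..<N}" and "mdeg \<alpha> = Suc (Suc 0)" by auto
    then obtain x \<beta> y \<gamma> where "x \<in> Poly_Mapping.keys \<alpha>" "y \<in> Poly_Mapping.keys \<alpha>"
      "\<alpha> = Poly_Mapping.single x 1 + \<beta>" "\<beta> = Poly_Mapping.single y 1 + \<gamma>" "mdeg \<gamma> = 0"
      by (elim mdeg_Suc_E) blast
    then have "\<alpha> = Poly_Mapping.single (min x y) 1 + Poly_Mapping.single (max x y) 1" "max x y < N"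
      using keys by (auto simp: mdeg_eq_0_iff min_def max_def add.commute)
    then show "\<alpha> \<in> (\<lambda>(a, b). Poly_Mapping.single a 1 + Poly_Mapping.single b 1) ` {(a, b). a \<le> b \<and> b < N}"
      by (auto intro!: image_eqI[of _ _ "(min x y, max x y)"])
  qed
qed

lemma hcomp_2_eq_h2: "hcomp N 2 = h2 N"
proof -
  have "hcomp N 2 = (\<Sum>p\<in>{(a, b). a \<le> b \<and> b < N}. mono (case p of (a, b) \<Rightarrow> Poly_Mapping.single a 1 + Poly_Mapping.single b 1))"
    unfolding hcomp_def by (rule sum.reindex_bij_betw[OF bij_betw_pairs_mdeg_2, symmetric])
  also have "\<dots> = (\<Sum>p\<in>{..<N} \<times> {..<N}. if fst p \<le> snd p then mono (case p of (a, b) \<Rightarrow> Poly_Mapping.single a 1 + Poly_Mapping.single b 1) else 0)"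
    by (subst sum.inter_filter[symmetric]) (auto intro: sum.cong)
  also have "\<dots> = h2 N"
    unfolding h2_def pair_sum_def sum.cartesian_product by (intro sum.cong refl) auto
  finally show ?thesis .
qed

lemma psi2_eq_complete_sum: "psi2 N j = complete_sum (h2 N + e2 N) (h2 N - e2 N) j"
  unfolding psi2_def complete_sum_def
proof (intro sum.cong refl)
  fix i assume "i \<in> {..j}"
  have "psum N 1 ^ (2 * j - 2 * i) = (psum N 1 ^ 2) ^ (j - i)"
    by (simp add: power_mult[symmetric] diff_mult_distrib2)
  then show "psum N 2 ^ i * psum N 1 ^ (2 * j - 2 * i) = (h2 N - e2 N) ^ i * (h2 N + e2 N) ^ (j - i)"
    by (simp only: psum_1_squared psum_2_eq)
qed

theorem lemma3p3:
  fixes N m k :: nat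
  assumes "1 \<le> k" and "k \<le> m"
  shows "schur_positive N (psi2 N m - hcomp N 2 ^ k * psi2 N (m - k))"
proof -
  have "psi2 N m - hcomp N 2 ^ k * psi2 N (m - k) = (\<Sum>j<k. h2 N ^ j * even_binom_part (h2 N) (e2 N) (m - j))"
    unfolding psi2_eq_complete_sum hcomp_2_eq_h2
    by (rule complete_sum_diff_power_mult[OF double_cancel_poly_mapping \<open>k \<le> m\<close>])
  also have "\<dots> = (\<Sum>j<k. \<Sum>i\<le>m - j. if even i
      then of_nat (m - j choose i) * (h2 N ^ (j + (m - j - i)) * e2 N ^ i) else 0)"
    unfolding even_binom_part_def sum_distrib_left by (intro sum.cong refl) (simp add: power_add mult_ac)
  also have "schur_positive N \<dots>"
    by (intro schur_positive_sum schur_positive_if schur_positive_of_nat_mult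
        schur_positive_h2_power_e2_power) auto
  finally show ?thesis .
qed

end
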